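(* An element $b=\sum_{i=0}^{k-1}b_iz^i\in B_k$ stabilizes $dT$ under the coadjoint action if and only if $b_i\in\mathfrak{h}_i$ for all $i=1,\dots,k-1$.
   Context: Let $\mathfrak{g}=\mathfrak{gl}_n(\mathbb{C})$, $\mathfrak{t}$ a Cartan subalgebra, $k>1$, $T=\sum_{i=1}^{k-1}T_iz^{-i}$, $T_i\in\mathfrak{t}$, $T_{k-1}\ne0$, $dT=\sum_{i=1}^{k-1}(-iT_i)z^{-i-1}dz$. $B_k=\{\sum_{i=0}^{k-1}b_iz^i:b_0=1,b_i\in\mathfrak{g}\}\subset\mathrm{GL}_n(\mathbb{C}[z]/(z^k))$; identify $\mathfrak{b}_k^*$ with $\{\sum_{i=1}^{k-1}X_iz^{-i-1}dz:X_i\in\mathfrak{g}\}$ via $\mathrm{res}_{z=0}\mathrm{tr}$; the coadjoint action is $\mathrm{Ad}^*_bB=$ the part of $bBb^{-1}$ in degrees $z^{-i-1}dz$, $1\le i\le k-1$. For $i=0,\dots,k-2$ put $\mathfrak{h}_i=\bigcap_{j=i+1}^{k-1}\ker\mathrm{ad}_{T_j}$, and $\mathfrak{h}_{k-1}=\mathfrak{g}$. *)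

theory Defs
  imports "HOL-Analysis.Analysis"
begin

text \<open>g = gl_n(C) is rendered as complex n x n matrices, type complex^'n^'n,
  with matrix product (**).  Elements of B_k and of b_k^* are coefficient
  sequences nat => matrix; only indices < k are meaningful.\<close>

type_synonym 'n cmat = "complex^'n^'n"

definition diag_mat :: "('n::finite) cmat \<Rightarrow> bool" where
  "diag_mat D \<longleftrightarrow> (\<forall>i j. i \<noteq> j \<longrightarrow> D $ i $ j = 0)"

definition cartan_subalgebra :: "('n::finite) cmat set \<Rightarrow> bool" where
  "cartan_subalgebra t \<longleftrightarrow>
     (\<exists>P::'n cmat. invertible P \<and> t = {P ** D ** matrix_inv P | D. diag_mat D})"

text \<open>Coefficients of the inverse of b = sum b_i z^i (b_0 = 1) in GL_n(C[z]/(z^k)):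
  c_0 = 1, c_q = - sum_{p=1..q} b_p c_{q-p}.\<close>
fun inv_coeff :: "(nat \<Rightarrow> ('n::finite) cmat) \<Rightarrow> nat \<Rightarrow> 'n cmat" where
  "inv_coeff b 0 = mat 1"
| "inv_coeff b (Suc q) = - (\<Sum>p\<le>q. b (Suc p) ** inv_coeff b (q - p))"

text \<open>Coefficient of z^{-i-1}dz of Ad^*_b B, where B = sum_{j=1}^{k-1} X_j z^{-j-1}dz:
  the degree z^{-i-1} part of b B b^{-1}.\<close>
definition coadj_coeff ::
  "nat \<Rightarrow> (nat \<Rightarrow> ('n::finite) cmat) \<Rightarrow> (nat \<Rightarrow> 'n cmat) \<Rightarrow> nat \<Rightarrow> 'n cmat" where
  "coadj_coeff k b X i =
     (\<Sum>j\<in>{i..<k}. \<Sum>p\<le>j - i. b p ** X j ** inv_coeff b (j - i - p))"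

text \<open>Coefficients of dT = sum_{i=1}^{k-1} (-i T_i) z^{-i-1} dz.\<close>
definition dT_coeff :: "(nat \<Rightarrow> ('n::finite) cmat) \<Rightarrow> nat \<Rightarrow> 'n cmat" where
  "dT_coeff T i = (- real i) *\<^sub>R T i"

definition stabilizes ::
  "nat \<Rightarrow> (nat \<Rightarrow> ('n::finite) cmat) \<Rightarrow> (nat \<Rightarrow> 'n cmat) \<Rightarrow> bool" where
  "stabilizes k b X \<longleftrightarrow> (\<forall>i\<in>{1..<k}. coadj_coeff k b X i = X i)"

definition h_sub :: "nat \<Rightarrow> (nat \<Rightarrow> ('n::finite) cmat) \<Rightarrow> nat \<Rightarrow> 'n cmat set" where
  "h_sub k T i = (if i = k - 1 then UNIV
     else {Y. \<forall>j\<in>{i<..k-1}. T j ** Y - Y ** T j = 0})"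

end

(* Since Ad^*_b B - B = [b, B] b^{-1} (truncated) and b^{-1} = 1 + O(z), the element b
   stabilizes B exactly when the truncated commutator [b, B] vanishes, by back-substitution
   from the top degree.  For B = dT, conjugate the commuting family T_j into diagonal form.
   The (r, s) entry of the degree m coefficient of [b, dT] is then, up to sign,
   sum_p b_p(r, s) a_{m+p} with a_j = j (t_j(s) - t_j(r)); eliminating from the largest j
   with a_j nonzero gives b_i(r, s) a_j = 0 for i < j, i.e. [b_i, T_j] = 0. *)

theory Submission
  imports Defs
begin

lemma matrix_add_rdistrib:
  "((A::'a::semiring_1^'n^'m) + B) ** (C::'a^'p^'n) = A ** C + B ** C"
  by (vector matrix_matrix_mult_def sum.distrib[symmetric] field_simps)

lemma matrix_diff_rdistrib:
  "((A::'a::ring_1^'n^'m) - B) ** (C::'a^'p^'n) = A ** C - B ** C"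
  by (vector matrix_matrix_mult_def sum_subtractf[symmetric] field_simps)

lemma matrix_diff_ldistrib:
  "(C::'a::ring_1^'n^'m) ** ((A::'a^'p^'n) - B) = C ** A - C ** B"
  by (vector matrix_matrix_mult_def sum_subtractf[symmetric] field_simps)

lemma matrix_sum_rdistrib:
  "(\<Sum>x\<in>S. f x) ** (C::'a::semiring_1^'p^'n) = (\<Sum>x\<in>S. (f x :: 'a^'n^'m) ** C)"
  by (induction S rule: infinite_finite_induct) (auto simp: matrix_add_rdistrib)

lemma matrix_sum_ldistrib:
  "(C::'a::semiring_1^'n^'m) ** (\<Sum>x\<in>S. f x) = (\<Sum>x\<in>S. C ** (f x :: 'a^'p^'n))"
  by (induction S rule: infinite_finite_induct) (auto simp: matrix_add_ldistrib)

lemma sum_triangle_swap: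
  fixes G :: "nat \<Rightarrow> nat \<Rightarrow> 'a::comm_monoid_add"
  shows "(\<Sum>s<N. \<Sum>p\<le>s. G p (s - p)) = (\<Sum>q<N. \<Sum>p<N - q. G p q)"
proof -
  have "(\<Sum>s<N. \<Sum>p\<le>s. G p (s - p)) = (\<Sum>(p, q)\<in>{(p, q). p + q < N}. G p q)"
    by (rule sum.triangle_reindex[symmetric])
  also have "\<dots> = (\<Sum>(q, p)\<in>{(q, p). p + q < N}. G p q)"
    by (rule sum.reindex_bij_witness[where i="\<lambda>(q, p). (p, q)" and j="\<lambda>(p, q). (q, p)"]) auto
  also have "{(q, p). p + q < N} = Sigma {..<N} (\<lambda>q. {..<N - q})"
    by auto
  finally show ?thesis
    by (simp add: sum.Sigma)
qed

lemma inv_coeff_convolution: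
  assumes "b 0 = mat 1"
  shows "(\<Sum>p\<le>s. b p ** inv_coeff b (s - p)) = (if s = 0 then mat 1 else 0)"
proof (cases s)
  case (Suc q)
  have "(\<Sum>p\<le>Suc q. b p ** inv_coeff b (Suc q - p))
      = b 0 ** inv_coeff b (Suc q) + (\<Sum>p\<le>q. b (Suc p) ** inv_coeff b (q - p))"
    by (subst sum.atMost_Suc_shift) simp
  then show ?thesis
    using Suc assms by simp
qed (use assms in simp)

text \<open>Coefficient of z^{-m-1} dz in the truncation of b B - B b, for B = sum X_j z^{-j-1} dz.\<close>
definition comm_coeff ::
  "nat \<Rightarrow> (nat \<Rightarrow> ('n::finite) cmat) \<Rightarrow> (nat \<Rightarrow> 'n cmat) \<Rightarrow> nat \<Rightarrow> 'n cmat" where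
  "comm_coeff k b X m = (\<Sum>p<k - m. b p ** X (m + p) - X (m + p) ** b p)"

lemma coadj_coeff_eq:
  assumes "b 0 = mat 1" "i < k"
  shows "coadj_coeff k b X i = X i + (\<Sum>q<k - i. comm_coeff k b X (i + q) ** inv_coeff b q)"
proof -
  let ?c = "inv_coeff b"
  have "coadj_coeff k b X i = (\<Sum>s<k - i. \<Sum>p\<le>s. b p ** X (i + s) ** ?c (s - p))"
    unfolding coadj_coeff_def
    by (rule sum.reindex_bij_witness[where i="\<lambda>s. i + s" and j="\<lambda>j. j - i"]) auto
  also have "\<dots> = (\<Sum>q<k - i. \<Sum>p<k - i - q. b p ** X (i + q + p) ** ?c q)"
    using sum_triangle_swap[where G="\<lambda>p q. b p ** X (i + q + p) ** ?c q"] by simp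
  finally have coadj:
    "coadj_coeff k b X i = (\<Sum>q<k - i. (\<Sum>p<k - i - q. b p ** X (i + q + p)) ** ?c q)"
    by (simp add: matrix_sum_rdistrib)
  have "X i = (\<Sum>s<k - i. X (i + s) ** (\<Sum>p\<le>s. b p ** ?c (s - p)))"
    using assms by (simp add: inv_coeff_convolution if_distrib cong: if_cong)
  also have "\<dots> = (\<Sum>q<k - i. \<Sum>p<k - i - q. X (i + q + p) ** b p ** ?c q)"
    using sum_triangle_swap[where G="\<lambda>p q. X (i + q + p) ** b p ** ?c q"]
    by (simp add: matrix_sum_ldistrib matrix_mul_assoc)
  finally have "X i = (\<Sum>q<k - i. (\<Sum>p<k - i - q. X (i + q + p) ** b p) ** ?c q)"
    by (simp add: matrix_sum_rdistrib)
  with coadj show ?thesis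
    by (simp add: comm_coeff_def matrix_diff_rdistrib sum_subtractf sum.distrib[symmetric]
        matrix_sum_rdistrib algebra_simps)
qed

lemma triangular_system_zero:
  fixes F c :: "nat \<Rightarrow> 'a::semiring_1^'n^'n"
  assumes "c 0 = mat 1"
    and "\<forall>i\<in>{1..<k}. (\<Sum>q<k - i. F (i + q) ** c q) = 0"
    and "m \<in> {1..<k}"
  shows "F m = 0"
  using assms(3)
proof (induction "k - m" arbitrary: m rule: less_induct)
  case less
  then obtain N where N: "k - m = Suc N"
    by (cases "k - m") auto
  have higher: "F (m + Suc q) = 0" if "q < N" for q
    using less.hyps[of "m + Suc q"] less.prems N that by auto
  have "0 = (\<Sum>q<k - m. F (m + q) ** c q)"
    using assms(2) less.prems by simp
  also have "\<dots> = F m"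
    using higher assms(1) unfolding N by (simp add: sum.lessThan_Suc_shift del: sum.lessThan_Suc)
  finally show ?case
    by simp
qed

lemma stabilizes_iff_comm_coeff_zero:
  assumes "b 0 = mat 1"
  shows "stabilizes k b X \<longleftrightarrow> (\<forall>m\<in>{1..<k}. comm_coeff k b X m = 0)"
proof -
  have "stabilizes k b X \<longleftrightarrow>
      (\<forall>i\<in>{1..<k}. (\<Sum>q<k - i. comm_coeff k b X (i + q) ** inv_coeff b q) = 0)"
    using assms by (simp add: stabilizes_def coadj_coeff_eq)
  also have "\<dots> \<longleftrightarrow> (\<forall>m\<in>{1..<k}. comm_coeff k b X m = 0)"
    using triangular_system_zero[where c="inv_coeff b" and F="comm_coeff k b X" and k=k]
    by (auto intro: sum.neutral)
  finally show ?thesis .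
qed

text \<open>Take J maximal with a J \<noteq> 0: the equation for m = J - i isolates x i * a J
  once x vanishes below i, so x vanishes on [0, J) by induction.\<close>
lemma correlation_zero_imp_products_zero:
  fixes x a :: "nat \<Rightarrow> 'a::semiring_no_zero_divisors"
  assumes eqs: "\<forall>m\<in>{1..<k}. (\<Sum>p<k - m. x p * a (m + p)) = 0"
    and "i < j" "j < k"
  shows "x i * a j = 0"
proof (cases "a j = 0")
  case False
  define S where "S = {l. l < k \<and> a l \<noteq> 0}"
  define J where "J = Max S"
  have "finite S" "j \<in> S"
    unfolding S_def using False \<open>j < k\<close> by auto
  then have "J \<in> S" "j \<le> J"
    unfolding J_def by (auto intro: Max_in)
  then have "J < k" "a J \<noteq> 0"
    unfolding S_def by auto
  have above_J: "a l = 0" if "J < l" "l < k" for l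
  proof (rule ccontr)
    assume "a l \<noteq> 0"
    then have "l \<le> J"
      using that \<open>finite S\<close> unfolding J_def S_def by simp
    then show False
      using that by simp
  qed
  have "x i' = 0" if "i' < J" for i'
    using that
  proof (induction i' rule: less_induct)
    case (less i')
    define m where "m = J - i'"
    have "(\<Sum>p<k - m. x p * a (m + p)) = (\<Sum>p\<in>{i'}. x p * a (m + p))"
    proof (rule sum.mono_neutral_right)
      show "\<forall>p\<in>{..<k - m} - {i'}. x p * a (m + p) = 0"
      proof
        fix p
        assume p: "p \<in> {..<k - m} - {i'}"
        show "x p * a (m + p) = 0"
        proof (cases "p < i'")
          case True
          then show ?thesis
            using less by simp
        next
          case False
          then have "J < m + p" "m + p < k"
            using p less.prems unfolding m_def by auto
          then show ?thesis
            using above_J by simp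
        qed
      qed
    qed (use less \<open>J < k\<close> in \<open>auto simp: m_def\<close>)
    moreover have "m \<in> {1..<k}" "m + i' = J"
      using less.prems \<open>J < k\<close> unfolding m_def by auto
    ultimately have "x i' * a J = 0"
      using eqs by simp
    then show ?case
      using \<open>a J \<noteq> 0\<close> by simp
  qed
  then show ?thesis
    using \<open>i < j\<close> \<open>j \<le> J\<close> by simp
qed simp

lemma comm_coeff_zero_if_commute:
  assumes "b 0 = mat 1"
    and "\<And>i j. 1 \<le> i \<Longrightarrow> i < j \<Longrightarrow> j < k \<Longrightarrow> b i ** X j = X j ** b i"
    and "1 \<le> m"
  shows "comm_coeff k b X m = 0"
  unfolding comm_coeff_def
proof (rule sum.neutral, rule ballI)
  fix p
  assume "p \<in> {..<k - m}"
  then show "b p ** X (m + p) - X (m + p) ** b p = 0"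
    using assms by (cases "p = 0") auto
qed

lemma commutator_diag_entry:
  assumes "diag_mat D"
  shows "(A ** D - D ** A) $ r $ s = A $ r $ s * (D $ s $ s - D $ r $ r)"
proof -
  have "(A ** D) $ r $ s = A $ r $ s * D $ s $ s"
    using assms unfolding matrix_matrix_mult_def diag_mat_def
    by (simp add: sum.remove[of UNIV s] sum.neutral)
  moreover have "(D ** A) $ r $ s = D $ r $ r * A $ r $ s"
    using assms unfolding matrix_matrix_mult_def diag_mat_def
    by (simp add: sum.remove[of UNIV r] sum.neutral)
  ultimately show ?thesis
    by (simp add: algebra_simps)
qed

lemma diag_mat_scaleR: "diag_mat D \<Longrightarrow> diag_mat (c *\<^sub>R D)"
  by (simp add: diag_mat_def)

lemma dT_coeff_commute: "A ** T j = T j ** A \<Longrightarrow> A ** dT_coeff T j = dT_coeff T j ** A"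
  unfolding dT_coeff_def by (simp only: matrix_scalar_ac scalar_matrix_assoc[symmetric])

lemma commute_if_comm_coeff_dT_zero_diag:
  assumes diag: "\<forall>j\<in>{1..<k}. diag_mat (T j)"
    and zero: "\<forall>m\<in>{1..<k}. comm_coeff k b (dT_coeff T) m = 0"
    and "i < j" "j < k"
  shows "b i ** T j = T j ** b i"
proof -
  have "(b i ** T j - T j ** b i) $ r $ s = 0" for r s
  proof -
    define x where "x p = b p $ r $ s" for p
    define a where "a l = real l *\<^sub>R (T l $ s $ s - T l $ r $ r)" for l
    have dT_entry: "(b p ** dT_coeff T l - dT_coeff T l ** b p) $ r $ s = - (x p * a l)"
      if "l \<in> {1..<k}" for p l
    proof -
      have "diag_mat (dT_coeff T l)"
        unfolding dT_coeff_def using diag that by (intro diag_mat_scaleR) simp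
      then have "(b p ** dT_coeff T l - dT_coeff T l ** b p) $ r $ s
          = x p * (dT_coeff T l $ s $ s - dT_coeff T l $ r $ r)"
        unfolding x_def by (rule commutator_diag_entry)
      also have "\<dots> = - (x p * a l)"
        by (simp add: dT_coeff_def a_def algebra_simps)
      finally show ?thesis .
    qed
    have "\<forall>m\<in>{1..<k}. (\<Sum>p<k - m. x p * a (m + p)) = 0"
    proof
      fix m
      assume m: "m \<in> {1..<k}"
      have "0 = comm_coeff k b (dT_coeff T) m $ r $ s"
        using zero m by simp
      also have "\<dots> = (\<Sum>p<k - m. (b p ** dT_coeff T (m + p) - dT_coeff T (m + p) ** b p) $ r $ s)"
        unfolding comm_coeff_def by (simp only: sum_component)
      also have "\<dots> = (\<Sum>p<k - m. - (x p * a (m + p)))"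
        using m by (intro sum.cong refl dT_entry) auto
      finally show "(\<Sum>p<k - m. x p * a (m + p)) = 0"
        by (simp add: sum_negf)
    qed
    then have "x i * a j = 0"
      using correlation_zero_imp_products_zero \<open>i < j\<close> \<open>j < k\<close> by blast
    then show ?thesis
      using commutator_diag_entry[OF diag[rule_format, of j]] \<open>i < j\<close> \<open>j < k\<close>
      by (simp add: x_def a_def)
  qed
  then show ?thesis
    by (simp add: vec_eq_iff)
qed

lemma conj_matrix_mult:
  fixes P Q :: "'a::semiring_1^'n^'n"
  assumes "P ** Q = mat 1"
  shows "(Q ** A ** P) ** (Q ** B ** P) = Q ** (A ** B) ** P"
proof -
  have "(Q ** A ** P) ** (Q ** B ** P) = Q ** A ** (P ** Q) ** B ** P"
    by (simp add: matrix_mul_assoc)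
  then show ?thesis
    using assms by (simp add: matrix_mul_assoc)
qed

lemma conj_matrix_cancel:
  fixes P Q A B :: "'a::semiring_1^'n^'n"
  assumes "P ** Q = mat 1" "Q ** A ** P = Q ** B ** P"
  shows "A = B"
proof -
  have "P ** (Q ** M ** P) ** Q = (P ** Q) ** M ** (P ** Q)" for M :: "'a^'n^'n"
    by (simp add: matrix_mul_assoc)
  then show ?thesis
    using assms by (metis matrix_mul_lid matrix_mul_rid)
qed

lemma comm_coeff_conj:
  fixes P Q :: "('n::finite) cmat"
  assumes "P ** Q = mat 1"
  shows "Q ** comm_coeff k b X m ** P
    = comm_coeff k (\<lambda>p. Q ** b p ** P) (\<lambda>j. Q ** X j ** P) m"
  unfolding comm_coeff_def matrix_sum_ldistrib matrix_sum_rdistrib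
  by (simp add: matrix_diff_ldistrib matrix_diff_rdistrib conj_matrix_mult[OF assms])

lemma dT_coeff_conj: "Q ** dT_coeff T j ** P = dT_coeff (\<lambda>j. Q ** T j ** P) j"
  unfolding dT_coeff_def by (simp only: matrix_scalar_ac scalar_matrix_assoc)

lemma comm_coeff_dT_zero_iff_commute:
  fixes P Q :: "('n::finite) cmat"
  assumes "b 0 = mat 1" "P ** Q = mat 1"
    and diag: "\<forall>j\<in>{1..<k}. diag_mat (Q ** T j ** P)"
  shows "(\<forall>m\<in>{1..<k}. comm_coeff k b (dT_coeff T) m = 0)
    \<longleftrightarrow> (\<forall>i j. 1 \<le> i \<longrightarrow> i < j \<longrightarrow> j < k \<longrightarrow> b i ** T j = T j ** b i)"
proof
  assume zero: "\<forall>m\<in>{1..<k}. comm_coeff k b (dT_coeff T) m = 0"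
  have conj_zero: "\<forall>m\<in>{1..<k}.
      comm_coeff k (\<lambda>p. Q ** b p ** P) (dT_coeff (\<lambda>j. Q ** T j ** P)) m = 0"
    using zero comm_coeff_conj[OF assms(2), of k b "dT_coeff T", symmetric]
    by (simp add: dT_coeff_conj)
  show "\<forall>i j. 1 \<le> i \<longrightarrow> i < j \<longrightarrow> j < k \<longrightarrow> b i ** T j = T j ** b i"
  proof (intro allI impI)
    fix i j
    assume "i < j" "j < k"
    with conj_zero have "(Q ** b i ** P) ** (Q ** T j ** P) = (Q ** T j ** P) ** (Q ** b i ** P)"
      using commute_if_comm_coeff_dT_zero_diag[OF diag] by blast
    then have "Q ** (b i ** T j) ** P = Q ** (T j ** b i) ** P"
      by (simp only: conj_matrix_mult[OF assms(2)])
    with assms(2) show "b i ** T j = T j ** b i"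
      by (rule conj_matrix_cancel)
  qed
next
  assume "\<forall>i j. 1 \<le> i \<longrightarrow> i < j \<longrightarrow> j < k \<longrightarrow> b i ** T j = T j ** b i"
  then have "b i ** dT_coeff T j = dT_coeff T j ** b i" if "1 \<le> i" "i < j" "j < k" for i j
    using that by (simp add: dT_coeff_commute)
  then show "\<forall>m\<in>{1..<k}. comm_coeff k b (dT_coeff T) m = 0"
    using comm_coeff_zero_if_commute[where b=b and X="dT_coeff T", OF assms(1)] by simp
qed

lemma cartan_subalgebra_diagonalizable:
  assumes "cartan_subalgebra t"
  obtains P Q :: "('n::finite) cmat"
  where "P ** Q = mat 1" "\<forall>A\<in>t. diag_mat (Q ** A ** P)"
proof -
  obtain P :: "'n cmat" where "invertible P" and t: "t = {P ** D ** matrix_inv P | D. diag_mat D}"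
    using assms unfolding cartan_subalgebra_def by blast
  define Q where "Q = matrix_inv P"
  have PQ: "P ** Q = mat 1" and QP: "Q ** P = mat 1"
    using someI_ex[OF \<open>invertible P\<close>[unfolded invertible_def]]
    unfolding Q_def matrix_inv_def by auto
  have "diag_mat (Q ** A ** P)" if "A \<in> t" for A
  proof -
    obtain D where "diag_mat D" "A = P ** D ** Q"
      using \<open>A \<in> t\<close> unfolding t Q_def by blast
    moreover have "Q ** (P ** D ** Q) ** P = (Q ** P) ** D ** (Q ** P)"
      by (simp add: matrix_mul_assoc)
    ultimately show ?thesis
      using QP by simp
  qed
  with PQ that show ?thesis
    by blast
qed

lemma mem_h_sub_iff:
  assumes "i < k"
  shows "Y \<in> h_sub k T i \<longleftrightarrow> (\<forall>j. i < j \<and> j < k \<longrightarrow> Y ** T j = T j ** Y)"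
  using assms by (auto simp: h_sub_def)

theorem lemma3p4:
  fixes k :: nat and t :: "('n::finite) cmat set"
    and T :: "nat \<Rightarrow> 'n cmat" and b :: "nat \<Rightarrow> 'n cmat"
  assumes "k > 1"
    and "cartan_subalgebra t"
    and "\<forall>i\<in>{1..<k}. T i \<in> t"
    and "T (k - 1) \<noteq> 0"
    and "b 0 = mat 1"
  shows "stabilizes k b (dT_coeff T) \<longleftrightarrow> (\<forall>i\<in>{1..<k}. b i \<in> h_sub k T i)"
proof -
  obtain P Q :: "'n cmat" where PQ: "P ** Q = mat 1" and "\<forall>A\<in>t. diag_mat (Q ** A ** P)"
    using assms(2) by (rule cartan_subalgebra_diagonalizable)
  with assms(3) have diag: "\<forall>j\<in>{1..<k}. diag_mat (Q ** T j ** P)"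
    by blast
  have "stabilizes k b (dT_coeff T) \<longleftrightarrow> (\<forall>m\<in>{1..<k}. comm_coeff k b (dT_coeff T) m = 0)"
    using assms(5) by (rule stabilizes_iff_comm_coeff_zero)
  also have "\<dots> \<longleftrightarrow> (\<forall>i j. 1 \<le> i \<longrightarrow> i < j \<longrightarrow> j < k \<longrightarrow> b i ** T j = T j ** b i)"
    using assms(5) PQ diag by (rule comm_coeff_dT_zero_iff_commute)
  also have "\<dots> \<longleftrightarrow> (\<forall>i\<in>{1..<k}. b i \<in> h_sub k T i)"
    by (auto simp: mem_h_sub_iff)
  finally show ?thesis .
qed

end
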